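(* Let $\omega_n>0$, $0\le\zeta<1$, $\omega_0=\omega_n\sqrt{1-\zeta^2}$, $T>0$, $s_0\in\mathbb{R}$, and let $N_\tau=\exp\!\left(\tau\begin{pmatrix}0&1\\-\omega_n^2&-2\zeta\omega_n\end{pmatrix}\right)$. Put $N_1=N_{s_0}$, $N_2=N_{T-s_0}$, and for $\alpha\in\mathbb{R}$ let $$J=N_2\begin{pmatrix}1&0\\ \alpha&1\end{pmatrix}N_1.$$ Then $$\operatorname{Tr}(J)=\operatorname{Tr}(N_2N_1)+\alpha\, e^{-\zeta\omega_n T}\,\frac{\sin(\omega_0 T)}{\omega_0},\qquad \det J=\det N_2\det N_1=e^{-2\zeta\omega_n T}.$$ Consequently, if $T=2\pi/\omega_f$ and $\omega_0\neq m\omega_f/2$ for all integers $m$, then the coefficient of $\alpha$ in $\operatorname{Tr}(J)$ is nonzero; in particular, when $\alpha=\dfrac{w_2h_1\sqrt{2a^*}}{2\sqrt{-H_{\min}}}$ with $w_2h_1\neq 0$, $a^*>0$, the trace of $J$ diverges like $(-H_{\min})^{-1/2}$ as $H_{\min}\to 0^-$, while the determinant stays constant.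
   Context: Setting: a forced impact oscillator $\ddot u+2\zeta\omega_n\dot u+\omega_n^2 u=g(t)$ for $u<\sigma$, with $g$ of period $T$ (angular frequency $\omega_f$), hard wall at $u=\sigma$ with $H(u,v)=\sigma-u$, $h_1=\partial H/\partial u$, reset map $\mathbf x\mapsto\mathbf x+W\,v(\mathbf x)$ with $W=(0\;\;w_2)^T$, $a^*>0$ the normal acceleration at the grazing point, and $H_{\min}<0$ the minimum of $H$ along the unconstrained trajectory near a grazing periodic orbit. The orbit takes time $s_0$ from the stroboscopic Poincaré section to the wall and $T-s_0$ back; $J$ is the Jacobian of the stroboscopic map near grazing, with $\begin{pmatrix}1&0\\ \alpha&1\end{pmatrix}$ the Jacobian of the zero-time discontinuity mapping. *)

theory Defs
  imports "HOL-Analysis.Analysis"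
begin

fun matpow :: "real^'n^'n \<Rightarrow> nat \<Rightarrow> real^'n^'n" where
  "matpow A 0 = mat 1"
| "matpow A (Suc k) = A ** matpow A k"

definition mexp :: "real^'n^'n \<Rightarrow> real^'n^'n" where
  "mexp A = (\<Sum>k. (1 / fact k) *\<^sub>R matpow A k)"

definition mat2 :: "real \<Rightarrow> real \<Rightarrow> real \<Rightarrow> real \<Rightarrow> real^2^2" where
  "mat2 a b c d = vector [vector [a, b], vector [c, d]]"

definition Nflow :: "real \<Rightarrow> real \<Rightarrow> real \<Rightarrow> real^2^2" where
  "Nflow wn zeta tau = mexp (tau *\<^sub>R mat2 0 1 (- wn\<^sup>2) (- 2 * zeta * wn))"

definition Jmat :: "real \<Rightarrow> real \<Rightarrow> real \<Rightarrow> real \<Rightarrow> real \<Rightarrow> real^2^2" where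
  "Jmat wn zeta T s0 alpha = Nflow wn zeta (T - s0) ** mat2 1 0 alpha 1 ** Nflow wn zeta s0"

end

theory Submission imports Defs begin

text \<open>With \<open>a = \<zeta>\<omega>\<^sub>n\<close>, the generator of \<open>N\<^sub>\<tau>\<close> is \<open>-a I + \<omega>\<^sub>0 K\<close> for a matrix \<open>K\<close> with
  \<open>K\<^sup>2 = -I\<close>. Hence \<open>z \<mapsto> Re z I + Im z K\<close> embeds \<open>\<complex>\<close> into the \<open>2\<times>2\<close> matrices, and
  \<open>N\<^sub>\<tau>\<close> is the image of \<open>exp (\<tau>(-a + i\<omega>\<^sub>0)) = e\<^sup>-\<^sup>a\<^sup>\<tau>(cos \<omega>\<^sub>0\<tau> + i sin \<omega>\<^sub>0\<tau>)\<close>.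
  Trace and determinant of products of such images with the shear \<open>[[1,0],[\<alpha>,1]]\<close>
  are then explicit, and the shear contributes \<open>\<alpha> Im(z\<^sub>1z\<^sub>2)/\<omega>\<^sub>0\<close> to the trace.\<close>

lemma mat2_nth [simp]:
  "mat2 a b c d $ 1 $ 1 = a" "mat2 a b c d $ 1 $ 2 = b"
  "mat2 a b c d $ 2 $ 1 = c" "mat2 a b c d $ 2 $ 2 = d"
  by (simp_all add: mat2_def)

lemma mat2_eq_iff:
  "mat2 a b c d = mat2 a' b' c' d' \<longleftrightarrow> a = a' \<and> b = b' \<and> c = c' \<and> d = d'"
  by (metis mat2_nth)

lemma mat2_mult:
  "mat2 a b c d ** mat2 e f g h = mat2 (a*e + b*g) (a*f + b*h) (c*e + d*g) (c*f + d*h)"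
  by (simp add: vec_eq_iff forall_2 matrix_matrix_mult_def sum_2)

lemma mat2_add: "mat2 a b c d + mat2 e f g h = mat2 (a+e) (b+f) (c+g) (d+h)"
  by (simp add: vec_eq_iff forall_2)

lemma scaleR_mat2: "r *\<^sub>R mat2 a b c d = mat2 (r*a) (r*b) (r*c) (r*d)"
  by (simp add: vec_eq_iff forall_2)

lemma mat_1_eq_mat2: "(mat 1 :: real^2^2) = mat2 1 0 0 1"
  by (simp add: vec_eq_iff forall_2 mat_def)

lemma trace_mat2: "trace (mat2 a b c d) = a + d"
  by (simp add: trace_def sum_2)

lemma det_mat2: "det (mat2 a b c d) = a*d - b*c"
  by (simp add: det_2)

definition complex_rep :: "real \<Rightarrow> real \<Rightarrow> complex \<Rightarrow> real^2^2" where
  "complex_rep a w0 z =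
     Re z *\<^sub>R mat2 1 0 0 1 + Im z *\<^sub>R mat2 (a/w0) (1/w0) (-(w0\<^sup>2 + a\<^sup>2)/w0) (-a/w0)"

lemma complex_rep_eq:
  "complex_rep a w0 z =
     mat2 (Re z + Im z * a / w0) (Im z / w0) (- Im z * (w0\<^sup>2 + a\<^sup>2) / w0) (Re z - Im z * a / w0)"
  by (simp add: complex_rep_def scaleR_mat2 mat2_add algebra_simps)

lemma bounded_linear_complex_rep: "bounded_linear (complex_rep a w0)"
  unfolding complex_rep_def
  by (intro bounded_linear_add bounded_linear_compose[OF bounded_linear_scaleR_left]
        bounded_linear_Re bounded_linear_Im)

lemma complex_rep_one: "complex_rep a w0 1 = mat 1"
  by (simp add: complex_rep_eq mat_1_eq_mat2)

lemma complex_rep_mult: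
  assumes "w0 \<noteq> 0"
  shows "complex_rep a w0 z ** complex_rep a w0 w = complex_rep a w0 (z * w)"
  using assms unfolding complex_rep_eq mat2_mult mat2_eq_iff
  by (simp add: field_simps power2_eq_square)

lemma matpow_complex_rep:
  assumes "w0 \<noteq> 0"
  shows "matpow (complex_rep a w0 z) k = complex_rep a w0 (z ^ k)"
  by (induction k) (simp_all add: complex_rep_one complex_rep_mult[OF assms])

lemma mexp_complex_rep:
  assumes "w0 \<noteq> 0"
  shows "mexp (complex_rep a w0 z) = complex_rep a w0 (exp z)"
proof -
  have "(\<lambda>k. complex_rep a w0 (z ^ k /\<^sub>R fact k)) sums complex_rep a w0 (exp z)"
    by (rule bounded_linear.sums[OF bounded_linear_complex_rep exp_converges])
  moreover have "(\<lambda>k. complex_rep a w0 (z ^ k /\<^sub>R fact k))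
      = (\<lambda>k. (1 / fact k) *\<^sub>R matpow (complex_rep a w0 z) k)"
    using linear_scale[OF bounded_linear.linear[OF bounded_linear_complex_rep]]
    by (auto simp: matpow_complex_rep[OF assms] divide_inverse_commute)
  ultimately show ?thesis
    unfolding mexp_def by (metis sums_unique)
qed

lemma trace_complex_rep_shear_complex_rep:
  assumes "w0 \<noteq> 0"
  shows "trace (complex_rep a w0 z1 ** mat2 1 0 \<alpha> 1 ** complex_rep a w0 z2)
       = trace (complex_rep a w0 z1 ** complex_rep a w0 z2) + \<alpha> * Im (z1 * z2) / w0"
  using assms unfolding complex_rep_eq mat2_mult trace_mat2 by (simp add: field_simps)

lemma det_complex_rep:
  assumes "w0 \<noteq> 0"
  shows "det (complex_rep a w0 z) = (cmod z)\<^sup>2"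
  using assms unfolding complex_rep_eq det_mat2 cmod_power2
  by (simp add: field_simps power2_eq_square)

lemma damped_frequency_pos:
  fixes wn zeta :: real
  assumes "wn > 0" "0 \<le> zeta" "zeta < 1"
  shows "wn * sqrt (1 - zeta\<^sup>2) > 0"
  using assms by (simp add: abs_square_less_1)

lemma Nflow_eq_complex_rep:
  fixes wn zeta :: real
  assumes "wn > 0" "0 \<le> zeta" "zeta < 1" and w0_def: "w0 = wn * sqrt (1 - zeta\<^sup>2)"
  shows "Nflow wn zeta t = complex_rep (zeta * wn) w0 (exp (t * Complex (- zeta * wn) w0))"
proof -
  have "w0 > 0"
    using damped_frequency_pos[OF assms(1-3)] w0_def by simp
  moreover have "wn\<^sup>2 = w0\<^sup>2 + (zeta * wn)\<^sup>2"
  proof -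
    have "1 - zeta\<^sup>2 \<ge> 0"
      using assms(2,3) by (simp add: abs_square_le_1)
    then show ?thesis
      unfolding w0_def by (simp add: power_mult_distrib algebra_simps)
  qed
  ultimately have "t *\<^sub>R mat2 0 1 (- wn\<^sup>2) (- 2 * zeta * wn)
      = complex_rep (zeta * wn) w0 (t * Complex (- zeta * wn) w0)"
    unfolding complex_rep_eq scaleR_mat2 mat2_eq_iff by (simp add: field_simps power2_eq_square)
  with \<open>w0 > 0\<close> show ?thesis
    unfolding Nflow_def by (simp add: mexp_complex_rep)
qed

lemma trace_Jmat:
  fixes wn zeta :: real
  assumes "wn > 0" "0 \<le> zeta" "zeta < 1" and "w0 = wn * sqrt (1 - zeta\<^sup>2)"
  shows "trace (Jmat wn zeta T s0 \<alpha>)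
       = trace (Nflow wn zeta (T - s0) ** Nflow wn zeta s0)
         + \<alpha> * exp (- zeta * wn * T) * sin (w0 * T) / w0"
proof -
  let ?E = "\<lambda>t::real. exp (t * Complex (- zeta * wn) w0)"
  have "w0 > 0"
    using damped_frequency_pos[OF assms(1-3)] assms(4) by simp
  then have "w0 \<noteq> 0"
    by simp
  have "?E (T - s0) * ?E s0 = ?E T"
    by (simp flip: exp_add distrib_right)
  then have "Im (?E (T - s0) * ?E s0) = exp (- zeta * wn * T) * sin (w0 * T)"
    by (simp add: Im_exp mult.commute)
  then show ?thesis
    unfolding Jmat_def Nflow_eq_complex_rep[OF assms]
      trace_complex_rep_shear_complex_rep[OF \<open>w0 \<noteq> 0\<close>]
    by simp
qed

lemma det_Jmat:
  "det (Jmat wn zeta T s0 \<alpha>) = det (Nflow wn zeta (T - s0)) * det (Nflow wn zeta s0)"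
  unfolding Jmat_def det_mul by (simp add: det_mat2)

lemma det_Nflow:
  fixes wn zeta :: real
  assumes "wn > 0" "0 \<le> zeta" "zeta < 1"
  shows "det (Nflow wn zeta t) = exp (- 2 * zeta * wn * t)"
proof -
  let ?w0 = "wn * sqrt (1 - zeta\<^sup>2)"
  have "?w0 \<noteq> 0"
    using damped_frequency_pos[OF assms] by linarith
  then have "det (Nflow wn zeta t) = exp (- zeta * wn * t) ^ 2"
    by (simp add: Nflow_eq_complex_rep[OF assms refl] det_complex_rep norm_exp_eq_Re)
  also have "\<dots> = exp (- 2 * zeta * wn * t)"
    by (simp flip: exp_of_nat_mult)
  finally show ?thesis .
qed

lemma sin_nonresonant_ne_zero:
  fixes w0 wf :: real
  assumes "wf \<noteq> 0" and "\<forall>m::int. w0 \<noteq> of_int m * wf / 2"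
  shows "sin (w0 * (2 * pi / wf)) \<noteq> 0"
proof
  assume "sin (w0 * (2 * pi / wf)) = 0"
  then obtain m :: int where "w0 * (2 * pi / wf) = of_int m * pi"
    by (auto simp: sin_zero_iff_int2)
  then have "w0 = of_int m * wf / 2"
    using \<open>wf \<noteq> 0\<close> by (simp add: field_simps)
  with assms(2) show False by blast
qed

lemma tendsto_affine_inverse_sqrt:
  fixes t0 c k :: real
  shows "((\<lambda>H. (t0 + k / sqrt (- H) * c) * sqrt (- H)) \<longlongrightarrow> k * c) (at_left 0)"
proof -
  have "eventually (\<lambda>H. t0 * sqrt (- H) + k * c = (t0 + k / sqrt (- H) * c) * sqrt (- H))
          (at_left (0::real))"
    by (auto simp: eventually_at_filter field_simps)
  moreover have "((\<lambda>H. t0 * sqrt (- H) + k * c) \<longlongrightarrow> t0 * sqrt (- 0) + k * c) (at_left (0::real))"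
    by (intro tendsto_intros)
  ultimately show ?thesis
    by (simp add: tendsto_cong)
qed

theorem mainTheorem3:
  fixes wn zeta w0 T s0 :: real
  assumes wn_pos: "wn > 0" and zeta_ge: "0 \<le> zeta" and zeta_lt: "zeta < 1"
    and w0_def: "w0 = wn * sqrt (1 - zeta\<^sup>2)"
    and T_pos: "T > 0"
  shows
    "(\<forall>alpha::real.
        trace (Jmat wn zeta T s0 alpha)
          = trace (Nflow wn zeta (T - s0) ** Nflow wn zeta s0)
            + alpha * exp (- zeta * wn * T) * sin (w0 * T) / w0
      \<and> det (Jmat wn zeta T s0 alpha) = det (Nflow wn zeta (T - s0)) * det (Nflow wn zeta s0)
      \<and> det (Nflow wn zeta (T - s0)) * det (Nflow wn zeta s0) = exp (- 2 * zeta * wn * T))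
   \<and> (\<forall>wf::real. T = 2 * pi / wf \<longrightarrow> (\<forall>m::int. w0 \<noteq> real_of_int m * wf / 2) \<longrightarrow>
        exp (- zeta * wn * T) * sin (w0 * T) / w0 \<noteq> 0
        \<and> (\<forall>w2 h1 astar :: real. w2 * h1 \<noteq> 0 \<longrightarrow> astar > 0 \<longrightarrow>
             (let alpha = (\<lambda>Hmin::real. w2 * h1 * sqrt (2 * astar) / (2 * sqrt (- Hmin)));
                  C = exp (- zeta * wn * T) * sin (w0 * T) / w0 * w2 * h1 * sqrt (2 * astar) / 2
              in C \<noteq> 0
                 \<and> ((\<lambda>Hmin. trace (Jmat wn zeta T s0 (alpha Hmin)) * sqrt (- Hmin)) \<longlongrightarrow> C) (at_left 0)
                 \<and> (\<forall>Hmin<0. det (Jmat wn zeta T s0 (alpha Hmin)) = exp (- 2 * zeta * wn * T)))))"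
proof -
  note damping = wn_pos zeta_ge zeta_lt
  have det_product: "det (Nflow wn zeta (T - s0)) * det (Nflow wn zeta s0) = exp (- 2 * zeta * wn * T)"
    by (simp add: det_Nflow[OF damping] flip: exp_add) (simp add: algebra_simps)
  have "w0 > 0"
    using damped_frequency_pos[OF damping] w0_def by simp
  show ?thesis
  proof (intro conjI allI impI)
    fix wf assume T_eq: "T = 2 * pi / wf" and nonresonant: "\<forall>m::int. w0 \<noteq> real_of_int m * wf / 2"
    then have "wf \<noteq> 0"
      using T_pos by auto
    then have "sin (w0 * T) \<noteq> 0"
      using sin_nonresonant_ne_zero[OF _ nonresonant] T_eq by simp
    with \<open>w0 > 0\<close> show coeff_nz: "exp (- zeta * wn * T) * sin (w0 * T) / w0 \<noteq> 0"
      by simp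
    fix w2 h1 astar :: real assume "w2 * h1 \<noteq> 0" "astar > 0"
    let ?c = "exp (- zeta * wn * T) * sin (w0 * T) / w0"
    let ?k = "w2 * h1 * sqrt (2 * astar) / 2"
    have "((\<lambda>H. trace (Jmat wn zeta T s0 (w2 * h1 * sqrt (2 * astar) / (2 * sqrt (- H))))
              * sqrt (- H)) \<longlongrightarrow> ?k * ?c) (at_left 0)"
      using tendsto_affine_inverse_sqrt[of "trace (Nflow wn zeta (T - s0) ** Nflow wn zeta s0)" ?k ?c]
      by (simp add: trace_Jmat[OF damping w0_def] mult.assoc)
    moreover have "?k * ?c \<noteq> 0"
      using coeff_nz \<open>w2 * h1 \<noteq> 0\<close> \<open>astar > 0\<close> by simp
    ultimately show "let alpha = (\<lambda>Hmin::real. w2 * h1 * sqrt (2 * astar) / (2 * sqrt (- Hmin)));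
                  C = exp (- zeta * wn * T) * sin (w0 * T) / w0 * w2 * h1 * sqrt (2 * astar) / 2
              in C \<noteq> 0
                 \<and> ((\<lambda>Hmin. trace (Jmat wn zeta T s0 (alpha Hmin)) * sqrt (- Hmin)) \<longlongrightarrow> C) (at_left 0)
                 \<and> (\<forall>Hmin<0. det (Jmat wn zeta T s0 (alpha Hmin)) = exp (- 2 * zeta * wn * T))"
      unfolding Let_def det_Jmat det_product by (simp add: mult_ac)
  qed (simp_all add: trace_Jmat[OF damping w0_def] det_Jmat det_product)
qed

end
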